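(* Let $n\ge2$ and $j\in\{1,\dots,n+1\}$. Let $X_1,\dots,X_j\in\{0,1\}^n$ be distinct strings such that the vectors $|P(X_1)\rangle_1,\dots,|P(X_j)\rangle_1$ are linearly independent. Then the number of strings $Y\in\{0,1\}^n\setminus\{X_1,\dots,X_j\}$ such that $|P(Y)\rangle_1$ lies in the linear span of $|P(X_1)\rangle_1,\dots,|P(X_j)\rangle_1$ is at most $2^{j-1}-j$.
   Context: For $x\in\{0,1\}^n$, $|P(x)\rangle_1=(1,x_1,\dots,x_n)^T\in\mathbb{R}^{n+1}$. *)

theory Defs
  imports Complex_Main
begin

text \<open>The vector |P(x)>_1 = (1, x_1, ..., x_n) in R^(n+1) is represented as a function
  nat => real with coordinates 0..n (coordinate 0 is the constant 1, coordinate i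
  is x_i for 1 <= i <= n); all coordinates beyond n are 0.\<close>

definition Pvec :: "nat \<Rightarrow> bool list \<Rightarrow> nat \<Rightarrow> real" where
  "Pvec n x i = (if i = 0 then 1 else if i \<le> n then (if x ! (i - 1) then 1 else 0) else 0)"

definition lin_indep :: "nat \<Rightarrow> (nat \<Rightarrow> nat \<Rightarrow> real) \<Rightarrow> nat \<Rightarrow> bool" where
  "lin_indep n v j = (\<forall>c :: nat \<Rightarrow> real.
      (\<forall>i\<le>n. (\<Sum>k<j. c k * v k i) = 0) \<longrightarrow> (\<forall>k<j. c k = 0))"

definition in_lin_span :: "nat \<Rightarrow> (nat \<Rightarrow> real) \<Rightarrow> (nat \<Rightarrow> nat \<Rightarrow> real) \<Rightarrow> nat \<Rightarrow> bool" where
  "in_lin_span n w v j = (\<exists>c :: nat \<Rightarrow> real. \<forall>i\<le>n. w i = (\<Sum>k<j. c k * v k i))"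

end

theory Submission
  imports Defs "HOL-Library.Function_Algebras"
begin

text \<open>Let \<open>P\<close> be the set of strings whose vector lies in a subspace spanned by \<open>m\<close>
  independent vectors. If two strings of \<open>P\<close> differ in some bit \<open>t\<close>, the hyperplane sections
  \<open>x\<^sub>t = 0\<close> and \<open>x\<^sub>t = x\<^sub>0\<close> of the subspace are proper subspaces of smaller dimension,
  the first one nonzero, and together they contain all vectors of strings in \<open>P\<close>. By induction
  on \<open>m\<close> this gives \<open>|P| \<le> 2\<^sup>m\<^sup>-\<^sup>1\<close>; the \<open>j\<close> given strings are among them.\<close>

definition fscale :: "real \<Rightarrow> (nat \<Rightarrow> real) \<Rightarrow> nat \<Rightarrow> real" where
  "fscale r v = (\<lambda>i. r * v i)"

interpretation fvs: vector_space fscale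
  by unfold_locales (auto simp: fscale_def fun_eq_iff algebra_simps)

lemma sum_fscale_apply: "(\<Sum>k\<in>A. fscale (c k) (v k)) i = (\<Sum>k\<in>A. c k * v k i)"
  by (induction A rule: infinite_finite_induct) (auto simp: fscale_def)

lemma subspace_coord_proportional: "fvs.subspace {v. v i = a * v k}"
  unfolding fvs.subspace_def by (auto simp: fscale_def algebra_simps)

context vector_space
begin

lemma span_image_iff:
  assumes "finite A" "inj_on v A"
  shows "w \<in> span (v ` A) \<longleftrightarrow> (\<exists>c. w = (\<Sum>k\<in>A. c k *s v k))"
proof
  assume "w \<in> span (v ` A)"
  then obtain u where "w = (\<Sum>b\<in>v ` A. u b *s b)"
    using span_finite[OF finite_imageI[OF assms(1)]] by auto
  then show "\<exists>c. w = (\<Sum>k\<in>A. c k *s v k)"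
    by (intro exI[of _ "u \<circ> v"]) (simp add: sum.reindex[OF assms(2)])
next
  assume "\<exists>c. w = (\<Sum>k\<in>A. c k *s v k)"
  then obtain c where w: "w = (\<Sum>k\<in>A. c k *s v k)" ..
  have "c k *s v k \<in> span (v ` A)" if "k \<in> A" for k
    using that by (intro span_scale span_base) simp
  then show "w \<in> span (v ` A)"
    unfolding w by (rule span_sum)
qed

lemma independent_imageI:
  assumes "finite A" "inj_on v A"
    and "\<And>c. (\<Sum>k\<in>A. c k *s v k) = 0 \<Longrightarrow> \<forall>k\<in>A. c k = 0"
  shows "independent (v ` A)"
proof
  assume "dependent (v ` A)"
  then obtain u where "\<exists>b\<in>v ` A. u b \<noteq> 0" "(\<Sum>b\<in>v ` A. u b *s b) = 0"
    using dependent_finite[OF finite_imageI[OF assms(1)]] by blast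
  then show False
    using assms(3)[of "u \<circ> v"] by (auto simp: sum.reindex[OF assms(2)])
qed

lemma subspace_smaller_basis:
  assumes "finite B" "independent B" "subspace U" "U \<subseteq> span B" "x \<in> span B" "x \<notin> U"
  obtains B' where "finite B'" "independent B'" "span B' = U" "card B' < card B"
proof -
  obtain B' where B': "B' \<subseteq> U" "independent B'" "U \<subseteq> span B'"
    by (rule basis_exists[of U])
  have span_B': "span B' = U" by (rule span_subspace[OF B'(1) B'(3) assms(3)])
  have "independent (insert x B')"
    using independent_insertI[OF _ B'(2)] span_B' assms(6) by simp
  moreover have "insert x B' \<subseteq> span B" using B'(1) assms(4,5) by blast
  ultimately have "finite (insert x B') \<and> card (insert x B') \<le> card B"
    by (rule independent_span_bound[OF assms(1)])
  moreover have "x \<notin> B'" using B'(1) assms(6) by blast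
  ultimately show ?thesis using that B'(2) span_B' by auto
qed

end

lemma Pvec_0 [simp]: "Pvec n Y 0 = 1"
  by (simp add: Pvec_def)

lemma Pvec_Suc: "t < n \<Longrightarrow> Pvec n Y (Suc t) = (if Y ! t then 1 else 0)"
  by (simp add: Pvec_def)

lemma Pvec_beyond: "n < i \<Longrightarrow> Pvec n Y i = 0"
  by (simp add: Pvec_def)

lemma Pvec_nonzero: "Pvec n Y \<noteq> 0"
  using Pvec_0 by (metis zero_fun_apply zero_neq_one)

lemma inj_on_Pvec: "inj_on (Pvec n) {Y. length Y = n}"
proof (rule inj_onI)
  fix a b assume a: "a \<in> {Y. length Y = n}" and b: "b \<in> {Y. length Y = n}"
    and eq: "Pvec n a = Pvec n b"
  have "a ! t = b ! t" if "t < n" for t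
    using fun_cong[OF eq, of "Suc t"] that by (simp add: Pvec_Suc split: if_splits)
  then show "a = b" using a b by (intro nth_equalityI) auto
qed

definition cube_points :: "nat \<Rightarrow> (nat \<Rightarrow> real) set \<Rightarrow> bool list set" where
  "cube_points n U = {Y. length Y = n \<and> Pvec n Y \<in> U}"

lemma finite_cube_points [simp]: "finite (cube_points n U)"
  unfolding cube_points_def
  by (rule finite_subset[OF _ finite_lists_length_eq[of "UNIV :: bool set" n]]) auto

lemma card_cube_points_le_1:
  assumes "\<And>Y0 Y1 t. Y0 \<in> cube_points n U \<Longrightarrow> Y1 \<in> cube_points n U \<Longrightarrow> t < n \<Longrightarrow> Y1 ! t \<Longrightarrow> Y0 ! t"
  shows "card (cube_points n U) \<le> 1"
proof -
  have "Y0 = Y1" if "Y0 \<in> cube_points n U" "Y1 \<in> cube_points n U" for Y0 Y1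
    using that assms[OF that] assms[OF that(2,1)]
    by (intro nth_equalityI) (auto simp: cube_points_def)
  then show ?thesis by (simp add: card_le_Suc0_iff_eq)
qed

lemma cube_points_split:
  assumes "finite B" "fvs.independent B"
    and Y0: "Y0 \<in> cube_points n (fvs.span B)" "\<not> Y0 ! t"
    and Y1: "Y1 \<in> cube_points n (fvs.span B)" "Y1 ! t"
    and "t < n"
  obtains B0 B1 where "finite B0" "fvs.independent B0" "B0 \<noteq> {}" "card B0 < card B"
    "finite B1" "fvs.independent B1" "card B1 < card B"
    "cube_points n (fvs.span B) \<subseteq> cube_points n (fvs.span B0) \<union> cube_points n (fvs.span B1)"
proof -
  \<comment> \<open>Since coordinate 0 of every cube vector is 1, \<open>H 0\<close> and \<open>H 1\<close> cut out the strings
    with bit \<open>t\<close> clear resp. set, by linear conditions.\<close>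
  define H where "H a = fvs.span B \<inter> {v. v (Suc t) = a * v 0}" for a
  have subspace_H: "fvs.subspace (H a)" for a
    unfolding H_def
    by (rule fvs.subspace_inter[OF fvs.subspace_span subspace_coord_proportional])
  have in_H: "Pvec n Y \<in> H (if Y ! t then 1 else 0)"
    if "Y \<in> cube_points n (fvs.span B)" for Y
    using that \<open>t < n\<close> by (simp add: H_def cube_points_def Pvec_Suc)
  obtain B0 where B0: "finite B0" "fvs.independent B0" "fvs.span B0 = H 0" "card B0 < card B"
    using fvs.subspace_smaller_basis[OF assms(1,2) subspace_H, of 0 "Pvec n Y1"]
      Y1 \<open>t < n\<close> by (auto simp: H_def cube_points_def Pvec_Suc)
  obtain B1 where B1: "finite B1" "fvs.independent B1" "fvs.span B1 = H 1" "card B1 < card B"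
    using fvs.subspace_smaller_basis[OF assms(1,2) subspace_H, of 1 "Pvec n Y0"]
      Y0 \<open>t < n\<close> by (auto simp: H_def cube_points_def Pvec_Suc)
  have "B0 \<noteq> {}"
    using in_H[OF Y0(1)] Y0(2) B0(3) Pvec_nonzero by (metis fvs.span_empty singletonD)
  moreover have "cube_points n (fvs.span B)
                   \<subseteq> cube_points n (fvs.span B0) \<union> cube_points n (fvs.span B1)"
  proof
    fix Y assume Y: "Y \<in> cube_points n (fvs.span B)"
    then show "Y \<in> cube_points n (fvs.span B0) \<union> cube_points n (fvs.span B1)"
      using in_H[OF Y] B0(3) B1(3) by (cases "Y ! t") (auto simp: cube_points_def)
  qed
  ultimately show ?thesis using that B0 B1 by blast
qed

lemma pow2_pred_add_le:
  assumes "1 \<le> a" "a < m" "b < m"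
  shows "2 ^ (a - 1) + 2 ^ (b - 1) \<le> (2::nat) ^ (m - 1)"
proof -
  have "(2::nat) ^ (a - 1) + 2 ^ (b - 1) \<le> 2 ^ (m - 2) + 2 ^ (m - 2)"
    using assms by (intro add_mono power_increasing) auto
  also have "\<dots> = 2 ^ Suc (m - 2)"
    by simp
  also have "Suc (m - 2) = m - 1"
    using assms by linarith
  finally show ?thesis .
qed

theorem card_cube_points_span:
  assumes "finite B" "fvs.independent B"
  shows "card (cube_points n (fvs.span B)) \<le> 2 ^ (card B - 1)"
  using assms
proof (induction "card B" arbitrary: B rule: less_induct)
  case less
  show ?case
  proof (cases "\<exists>Y0 Y1 t. Y0 \<in> cube_points n (fvs.span B) \<and> Y1 \<in> cube_points n (fvs.span B)
                  \<and> t < n \<and> \<not> Y0 ! t \<and> Y1 ! t")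
    case True
    then obtain B0 B1 where B0: "finite B0" "fvs.independent B0" "B0 \<noteq> {}" "card B0 < card B"
      and B1: "finite B1" "fvs.independent B1" "card B1 < card B"
      and cover: "cube_points n (fvs.span B)
                   \<subseteq> cube_points n (fvs.span B0) \<union> cube_points n (fvs.span B1)"
      using cube_points_split[OF less.prems] by metis
    have "card (cube_points n (fvs.span B))
          \<le> card (cube_points n (fvs.span B0)) + card (cube_points n (fvs.span B1))"
      by (rule le_trans[OF card_mono[OF _ cover] card_Un_le]) simp
    also have "\<dots> \<le> 2 ^ (card B0 - 1) + 2 ^ (card B1 - 1)"
      using less.hyps B0 B1 by (meson add_mono)
    also have "\<dots> \<le> 2 ^ (card B - 1)"
      using B0(1,3,4) B1(3) by (intro pow2_pred_add_le) (auto simp: Suc_le_eq card_gt_0_iff)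
    finally show ?thesis .
  next
    case False
    then have "card (cube_points n (fvs.span B)) \<le> 1"
      by (intro card_cube_points_le_1) blast
    then show ?thesis using one_le_power[of "2::nat" "card B - 1"] by linarith
  qed
qed

lemma lin_indep_imp_independent:
  assumes "inj_on v {..<j}" "lin_indep n v j"
  shows "fvs.independent (v ` {..<j})"
proof (rule fvs.independent_imageI[OF finite_lessThan assms(1)])
  fix c assume "(\<Sum>k<j. fscale (c k) (v k)) = 0"
  then have "\<forall>i\<le>n. (\<Sum>k<j. c k * v k i) = 0"
    by (metis sum_fscale_apply zero_fun_apply)
  then show "\<forall>k\<in>{..<j}. c k = 0"
    using assms(2) by (simp add: lin_indep_def)
qed

lemma in_lin_span_iff_span:
  assumes "inj_on v {..<j}" "\<forall>i>n. w i = 0" "\<forall>k<j. \<forall>i>n. v k i = 0"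
  shows "in_lin_span n w v j \<longleftrightarrow> w \<in> fvs.span (v ` {..<j})"
proof -
  have "w i = (\<Sum>k<j. c k * v k i)" if "n < i" for i c
    using that assms(2,3) by simp
  then have "(\<forall>i\<le>n. w i = (\<Sum>k<j. c k * v k i)) \<longleftrightarrow> (\<forall>i. w i = (\<Sum>k<j. c k * v k i))" for c
    using not_le by blast
  then show ?thesis
    unfolding fvs.span_image_iff[OF finite_lessThan assms(1)] in_lin_span_def
    by (simp add: fun_eq_iff sum_fscale_apply)
qed

theorem lemma4:
  fixes n j :: nat and X :: "nat \<Rightarrow> bool list"
  assumes "n \<ge> 2"
    and "1 \<le> j" and "j \<le> n + 1"
    and "\<forall>k<j. length (X k) = n"
    and "inj_on X {..<j}"
    and "lin_indep n (\<lambda>k. Pvec n (X k)) j"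
  shows "card {Y. length Y = n \<and> Y \<notin> X ` {..<j} \<and>
                  in_lin_span n (Pvec n Y) (\<lambda>k. Pvec n (X k)) j}
         \<le> 2 ^ (j - 1) - j"
proof -
  define v where "v = (\<lambda>k. Pvec n (X k))"
  define S where "S = fvs.span (v ` {..<j})"
  have "X ` {..<j} \<subseteq> {Y. length Y = n}"
    using assms(4) by auto
  then have inj_v: "inj_on v {..<j}"
    unfolding v_def using comp_inj_on[OF assms(5) inj_on_subset[OF inj_on_Pvec]]
    by (simp add: comp_def)
  have card_S: "card (cube_points n S) \<le> 2 ^ (j - 1)"
    using card_cube_points_span[OF _ lin_indep_imp_independent[OF inj_v]] assms(6)
      card_image[OF inj_v] unfolding S_def v_def by simp
  have given: "X ` {..<j} \<subseteq> cube_points n S"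
    using assms(4) fvs.span_base by (auto simp: S_def v_def cube_points_def)
  have "{Y. length Y = n \<and> Y \<notin> X ` {..<j} \<and> in_lin_span n (Pvec n Y) v j}
        = cube_points n S - X ` {..<j}"
    using in_lin_span_iff_span[OF inj_v] by (auto simp: S_def v_def cube_points_def Pvec_beyond)
  moreover have "card (cube_points n S - X ` {..<j}) = card (cube_points n S) - j"
    using card_Diff_subset[OF finite_subset[OF given] given] card_image[OF assms(5)] by simp
  ultimately show ?thesis using card_S unfolding v_def by simp
qed

end
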